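(* Let $P\in\mathfrak N^{LS}_2$ with $h_P\ge2$ and let $r:P\to R$ be a retraction such that $R(0)$ is a 2-element antichain. (1) $R(0)\subseteq P(0)\cup P(1)$ and $R(0)\cap P(0)\neq\emptyset$; moreover, if $R(0)\cap P(1)\neq\emptyset$, then $h_R\ge1$ and $R(1\to h_R)$ is a retract of $P(2\to h_P)$. (2) There is a retraction $s:P\to S$ with $S\cong R$, $S(0)\subseteq P(0)$, $s[P(0)]=S(0)$, and $s^{-1}(p)=\{p\}$ for some $p\in S(0)$.
   Context: All posets are finite; $h_P$ is the height; level sets $P(0)=\min P$, $P(k+1)=\min(P\setminus\bigcup_{i\le k}P(i))$; $P(k\to\ell)=\bigcup_{i=k}^\ell P(i)$ as induced subposet. Level sets $R(\ell)$ and $R(k\to\ell)$ of a retract $R$ refer to $R$'s own levels. $A<B$ means $a<b$ for all $a\in A,b\in B$. A retraction $r:P\to R$ is an idempotent order-preserving self-map with image $R$. A section of width three is a poset $P$ of height $h_P\ge1$ with carrier $\{c_{k,j}:k\in[0,h_P],j\in\{0,1,2\}\}$ such that: $c_{0,j}<\dots<c_{h_P,j}$ for each $j$; each $\{c_{k,0},c_{k,1},c_{k,2}\}$ is an antichain; $c_{k,i}<c_{\ell,j}\Rightarrow c_{k,i+1}<c_{\ell,j+1}$ (indices mod 3); and for no $k$ is $P(k)<P(k+1)$. It is nice if for all $x<y$: $\{z:z>x\}\not\subseteq\{z:z\ge y\}$ and $\{z:z<y\}\not\subseteq\{z:z\le x\}$. $\mathfrak N_2$ is the class of nice sections of width three of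 height $\ge2$ with horizon 2 (i.e. $P(k)<P(\ell)$ whenever $\ell\ge k+2$). $\mathfrak N^{LS}_2=\{P(0\to h_P-1):P\in\mathfrak N_2\}$ (lower segments). Each consecutive level pair $P(k)\cup P(k+1)$ of such posets is a 6-crown ($x_0<y_0>x_1<y_1>x_2<y_2>x_0$, no other comparabilities) or of type $3C$ (three disjoint 2-chains), and $P(0)\cup P(1)$ is a 6-crown for $P\in\mathfrak N^{LS}_2$ with $h_P\ge1$. *)

theory Defs
  imports Main
begin

text \<open>Finite posets are represented by a carrier set together with an order
relation; subposets are always induced (same relation, smaller carrier).\<close>

definition is_poset :: "'a set \<Rightarrow> ('a \<Rightarrow> 'a \<Rightarrow> bool) \<Rightarrow> bool" where
  "is_poset A le \<longleftrightarrow> finite A \<and> (\<forall>x\<in>A. le x x)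
     \<and> (\<forall>x\<in>A. \<forall>y\<in>A. le x y \<and> le y x \<longrightarrow> x = y)
     \<and> (\<forall>x\<in>A. \<forall>y\<in>A. \<forall>z\<in>A. le x y \<and> le y z \<longrightarrow> le x z)"

definition strict :: "('a \<Rightarrow> 'a \<Rightarrow> bool) \<Rightarrow> 'a \<Rightarrow> 'a \<Rightarrow> bool" where
  "strict le x y \<longleftrightarrow> le x y \<and> x \<noteq> y"

definition minimals :: "'a set \<Rightarrow> ('a \<Rightarrow> 'a \<Rightarrow> bool) \<Rightarrow> 'a set" where
  "minimals A le = {x\<in>A. \<not> (\<exists>y\<in>A. strict le y x)}"

fun rest :: "'a set \<Rightarrow> ('a \<Rightarrow> 'a \<Rightarrow> bool) \<Rightarrow> nat \<Rightarrow> 'a set" where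
  "rest A le 0 = A"
| "rest A le (Suc k) = rest A le k - minimals (rest A le k) le"

definition level :: "'a set \<Rightarrow> ('a \<Rightarrow> 'a \<Rightarrow> bool) \<Rightarrow> nat \<Rightarrow> 'a set" where
  "level A le k = minimals (rest A le k) le"

definition height :: "'a set \<Rightarrow> ('a \<Rightarrow> 'a \<Rightarrow> bool) \<Rightarrow> nat" where
  "height A le = Max {k. level A le k \<noteq> {}}"

definition levels_between :: "'a set \<Rightarrow> ('a \<Rightarrow> 'a \<Rightarrow> bool) \<Rightarrow> nat \<Rightarrow> nat \<Rightarrow> 'a set" where
  "levels_between A le k l = (\<Union>i\<in>{k..l}. level A le i)"

definition set_less :: "('a \<Rightarrow> 'a \<Rightarrow> bool) \<Rightarrow> 'a set \<Rightarrow> 'a set \<Rightarrow> bool" where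
  "set_less le X Y \<longleftrightarrow> (\<forall>x\<in>X. \<forall>y\<in>Y. strict le x y)"

definition antichain :: "('a \<Rightarrow> 'a \<Rightarrow> bool) \<Rightarrow> 'a set \<Rightarrow> bool" where
  "antichain le X \<longleftrightarrow> (\<forall>x\<in>X. \<forall>y\<in>X. le x y \<longrightarrow> x = y)"

definition order_preserving :: "'a set \<Rightarrow> ('a \<Rightarrow> 'a \<Rightarrow> bool) \<Rightarrow> ('a \<Rightarrow> 'a) \<Rightarrow> bool" where
  "order_preserving A le r \<longleftrightarrow> (\<forall>x\<in>A. \<forall>y\<in>A. le x y \<longrightarrow> le (r x) (r y))"

definition retraction :: "'a set \<Rightarrow> ('a \<Rightarrow> 'a \<Rightarrow> bool) \<Rightarrow> ('a \<Rightarrow> 'a) \<Rightarrow> bool" where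
  "retraction A le r \<longleftrightarrow> r ` A \<subseteq> A \<and> order_preserving A le r \<and> (\<forall>x\<in>A. r (r x) = r x)"

definition order_iso :: "'a set \<Rightarrow> ('a \<Rightarrow> 'a \<Rightarrow> bool) \<Rightarrow> 'b set \<Rightarrow> ('b \<Rightarrow> 'b \<Rightarrow> bool) \<Rightarrow> bool" where
  "order_iso A le B le' \<longleftrightarrow>
     (\<exists>f. bij_betw f A B \<and> (\<forall>x\<in>A. \<forall>y\<in>A. le x y \<longleftrightarrow> le' (f x) (f y)))"

definition is_retract_of :: "'b set \<Rightarrow> ('b \<Rightarrow> 'b \<Rightarrow> bool) \<Rightarrow> 'a set \<Rightarrow> ('a \<Rightarrow> 'a \<Rightarrow> bool) \<Rightarrow> bool" where
  "is_retract_of B leB A leA \<longleftrightarrow> (\<exists>r. retraction A leA r \<and> order_iso (r ` A) leA B leB)"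

text \<open>Sections of width three: the element c_{k,j} is represented by the pair (k,j).\<close>
definition sec_carrier :: "nat \<Rightarrow> (nat \<times> nat) set" where
  "sec_carrier h = {..h} \<times> {..<3}"

definition section3 :: "nat \<Rightarrow> (nat \<times> nat \<Rightarrow> nat \<times> nat \<Rightarrow> bool) \<Rightarrow> bool" where
  "section3 h le \<longleftrightarrow>
     is_poset (sec_carrier h) le \<and> h \<ge> 1 \<and> height (sec_carrier h) le = h
     \<and> (\<forall>j<3. \<forall>k<h. strict le (k, j) (Suc k, j))
     \<and> (\<forall>k\<le>h. antichain le {(k,0), (k,1), (k,2)})
     \<and> (\<forall>k\<le>h. \<forall>l\<le>h. \<forall>i<3. \<forall>j<3. strict le (k, i) (l, j)
            \<longrightarrow> strict le (k, (i + 1) mod 3) (l, (j + 1) mod 3))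
     \<and> (\<forall>k<h. \<not> set_less le (level (sec_carrier h) le k) (level (sec_carrier h) le (Suc k)))"

definition nice :: "'a set \<Rightarrow> ('a \<Rightarrow> 'a \<Rightarrow> bool) \<Rightarrow> bool" where
  "nice A le \<longleftrightarrow> (\<forall>x\<in>A. \<forall>y\<in>A. strict le x y \<longrightarrow>
       \<not> ({z\<in>A. strict le x z} \<subseteq> {z\<in>A. le y z})
     \<and> \<not> ({z\<in>A. strict le z y} \<subseteq> {z\<in>A. le z x}))"

definition horizon2 :: "'a set \<Rightarrow> ('a \<Rightarrow> 'a \<Rightarrow> bool) \<Rightarrow> bool" where
  "horizon2 A le \<longleftrightarrow> (\<forall>k l. l \<ge> k + 2 \<longrightarrow> set_less le (level A le k) (level A le l))"

text \<open>Membership in the class N_2 (for the section with carrier indexed by [0,h]\<times>{0,1,2}).\<close>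
definition N2 :: "nat \<Rightarrow> (nat \<times> nat \<Rightarrow> nat \<times> nat \<Rightarrow> bool) \<Rightarrow> bool" where
  "N2 h le \<longleftrightarrow> section3 h le \<and> nice (sec_carrier h) le \<and> h \<ge> 2
     \<and> horizon2 (sec_carrier h) le"

text \<open>Carrier of the lower segment Q(0 \<rightarrow> h_Q - 1) of a section Q; these carriers
 (with the induced order) are exactly the members of N_2^LS.\<close>
definition lower_segment :: "nat \<Rightarrow> (nat \<times> nat \<Rightarrow> nat \<times> nat \<Rightarrow> bool) \<Rightarrow> (nat \<times> nat) set" where
  "lower_segment h le = levels_between (sec_carrier h) le 0 (h - 1)"

end

theory Submission
  imports Defs
begin

text \<open>Write \<open>L0 = P(0)\<close>, \<open>L1 = P(1)\<close>, \<open>U = P(2 \<rightarrow> h\<^sub>P)\<close>. The bottom level has three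
  points, every point of \<open>L1\<close> lies above two of them and every point of \<open>U\<close> above all three.
  A retraction \<open>r\<close> sends everything below a minimal point \<open>m\<close> of \<open>R\<close> to \<open>m\<close>, so the
  bottom points below the two minimal points \<open>a, b\<close> of \<open>R\<close> form disjoint sets; counting
  inside the three-element \<open>L0\<close> gives \<open>a \<in> L0\<close> and \<open>b \<in> L0 \<union> L1\<close>.

  If \<open>b \<in> L1\<close>, the two bottom points other than \<open>a\<close> are sent to \<open>b\<close>, so \<open>r\<close> maps \<open>U\<close>
  above both \<open>a\<close> and \<open>b\<close> and restricts to a retraction of \<open>U\<close> onto \<open>R(1 \<rightarrow> h\<^sub>R)\<close>;
  composing \<open>r\<close> with the embedding of \<open>R\<close> that moves \<open>b\<close> down to a bottom point below it
  gives \<open>s\<close>. If \<open>a, b \<in> L0\<close>, the third bottom point \<open>c\<close> is redirected from \<open>r(c)\<close> to a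
  minimal point of \<open>R\<close> below \<open>r(c)\<close>.\<close>

section \<open>Minimal elements and levels\<close>

lemma is_poset_subset: "is_poset A le \<Longrightarrow> B \<subseteq> A \<Longrightarrow> is_poset B le"
  unfolding is_poset_def by (meson finite_subset subsetD)

lemma is_posetD:
  assumes "is_poset A le"
  shows is_poset_finite: "finite A"
    and is_poset_refl: "x \<in> A \<Longrightarrow> le x x"
    and is_poset_antisym: "x \<in> A \<Longrightarrow> y \<in> A \<Longrightarrow> le x y \<Longrightarrow> le y x \<Longrightarrow> x = y"
    and is_poset_trans: "x \<in> A \<Longrightarrow> y \<in> A \<Longrightarrow> z \<in> A \<Longrightarrow> le x y \<Longrightarrow> le y z \<Longrightarrow> le x z"
  using assms unfolding is_poset_def by blast+

lemma minimals_iff: "x \<in> minimals A le \<longleftrightarrow> x \<in> A \<and> (\<forall>y\<in>A. le y x \<longrightarrow> y = x)"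
  unfolding minimals_def strict_def by blast

lemma minimals_subset: "minimals A le \<subseteq> A"
  unfolding minimals_def by blast

lemma minimals_incomparable:
  "m \<in> minimals A le \<Longrightarrow> m' \<in> minimals A le \<Longrightarrow> le m m' \<Longrightarrow> m = m'"
  unfolding minimals_iff by blast

lemma level_0: "level A le 0 = minimals A le"
  unfolding level_def by simp

lemma poset_has_minimal:
  assumes "is_poset A le" "A \<noteq> {}"
  shows "minimals A le \<noteq> {}"
  using is_poset_finite[OF assms(1)] assms(2,1)
proof (induction A rule: finite_ne_induct)
  case (singleton x)
  then show ?case by (auto simp: minimals_iff)
next
  case (insert x F)
  have "is_poset F le"
    using insert.prems is_poset_subset by blast
  then obtain m where m: "m \<in> minimals F le"
    using insert.IH by blast
  show ?case
  proof (cases "le x m")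
    case True
    have "x \<in> minimals (insert x F) le"
      unfolding minimals_iff
    proof (intro conjI ballI impI)
      fix y assume y: "y \<in> insert x F" "le y x"
      have "y = m" if "y \<in> F"
        using m that y(2) True is_poset_trans[OF insert.prems, of y x m]
        by (simp add: minimals_iff)
      then show "y = x"
        using y True m is_poset_antisym[OF insert.prems, of x m] by (auto simp: minimals_iff)
    qed simp
    then show ?thesis by blast
  next
    case False
    then have "m \<in> minimals (insert x F) le"
      using m by (auto simp: minimals_iff)
    then show ?thesis by blast
  qed
qed

lemma minimal_below:
  assumes "is_poset A le" "x \<in> A"
  obtains m where "m \<in> minimals A le" "le m x"
proof -
  let ?D = "{y\<in>A. le y x}"
  have "is_poset ?D le" "?D \<noteq> {}"
    using assms is_poset_subset[OF assms(1)] is_poset_refl[OF assms] by auto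
  then obtain m where m: "m \<in> minimals ?D le"
    using poset_has_minimal by blast
  then have "m \<in> minimals A le"
    using is_poset_trans[OF assms(1) _ _ assms(2)] by (auto simp: minimals_iff)
  then show thesis
    using m that by (auto simp: minimals_iff)
qed

lemma rest_subset: "rest A le k \<subseteq> A"
  by (induction k) auto

lemma rest_antimono: "j \<le> k \<Longrightarrow> rest A le k \<subseteq> rest A le j"
  by (induction k) (auto simp: le_Suc_eq)

lemma level_subset_rest: "level A le k \<subseteq> rest A le k"
  unfolding level_def by (rule minimals_subset)

lemma rest_card_bound:
  assumes "is_poset A le" "rest A le k \<noteq> {}"
  shows "card (rest A le k) + k \<le> card A"
  using assms(2)
proof (induction k)
  case 0
  then show ?case by simp
next
  case (Suc k)
  have ne: "rest A le k \<noteq> {}"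
    using Suc.prems by auto
  have fin: "finite (rest A le k)"
    using finite_subset[OF rest_subset is_poset_finite[OF assms(1)]] .
  have "minimals (rest A le k) le \<noteq> {}"
    using poset_has_minimal[OF is_poset_subset[OF assms(1) rest_subset] ne] .
  then have "rest A le (Suc k) \<subset> rest A le k"
    using minimals_subset[of "rest A le k" le] by auto
  then have "card (rest A le (Suc k)) < card (rest A le k)"
    using psubset_card_mono[OF fin] by blast
  then show ?case
    using Suc.IH[OF ne] by simp
qed

lemma level_nonempty_le_height:
  assumes "is_poset A le" "level A le k \<noteq> {}"
  shows "k \<le> height A le"
proof -
  have "j \<le> card A" if "level A le j \<noteq> {}" for j
  proof -
    have "rest A le j \<noteq> {}"
      using level_subset_rest[of A le j] that by blast
    then show ?thesis
      using rest_card_bound[OF assms(1), of j] by linarith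
  qed
  then have "{k. level A le k \<noteq> {}} \<subseteq> {..card A}"
    by auto
  then have "finite {k. level A le k \<noteq> {}}"
    using finite_subset by blast
  then show ?thesis
    unfolding height_def using assms(2) by (simp add: Max_ge)
qed

lemma mem_some_level:
  assumes "is_poset A le" "x \<in> A"
  obtains k where "x \<in> level A le k" "k \<le> height A le"
proof -
  have "x \<notin> rest A le k \<Longrightarrow> \<exists>j<k. x \<in> level A le j" for k
  proof (induction k)
    case (Suc k)
    then show ?case
      by (cases "x \<in> rest A le k") (auto simp: level_def less_Suc_eq)
  qed (use assms(2) in simp)
  moreover have "rest A le (Suc (card A)) = {}"
    using rest_card_bound[OF assms(1), of "Suc (card A)"] by linarith
  ultimately obtain k where "x \<in> level A le k"
    by blast
  then show thesis
    using that level_nonempty_le_height[OF assms(1)] by blast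
qed

lemma levels_between_one_height:
  assumes "is_poset A le"
  shows "levels_between A le 1 (height A le) = A - minimals A le"
proof -
  have upper: "level A le k \<subseteq> A - minimals A le" if "1 \<le> k" for k
  proof -
    have "rest A le k \<subseteq> rest A le (Suc 0)"
      using rest_antimono[of "Suc 0" k A le] that by simp
    then show ?thesis
      using level_subset_rest[of A le k] by simp
  qed
  have lower: "x \<in> levels_between A le 1 (height A le)" if x: "x \<in> A - minimals A le" for x
  proof -
    obtain k where "x \<in> level A le k" "k \<le> height A le"
      using mem_some_level[OF assms] x by blast
    moreover have "k \<noteq> 0"
      using calculation(1) x level_0[of A le] by (cases k) auto
    ultimately show ?thesis
      unfolding levels_between_def by auto
  qed
  show ?thesis
  proof
    show "levels_between A le 1 (height A le) \<subseteq> A - minimals A le"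
      unfolding levels_between_def using upper by (intro UN_least) auto
  qed (use lower in blast)
qed

lemma height_pos:
  assumes "is_poset A le" "A \<noteq> minimals A le"
  shows "1 \<le> height A le"
proof (rule ccontr)
  assume "\<not> 1 \<le> height A le"
  then have "levels_between A le 1 (height A le) = {}"
    unfolding levels_between_def by auto
  then show False
    using levels_between_one_height[OF assms(1)] assms(2) minimals_subset[of A le] by auto
qed

section \<open>Retractions\<close>

lemma order_iso_refl: "order_iso A le A le"
  unfolding order_iso_def by (intro exI[of _ id]) simp

lemma retractionD:
  assumes "retraction A le r"
  shows retraction_in: "x \<in> A \<Longrightarrow> r x \<in> A"
    and retraction_mono: "x \<in> A \<Longrightarrow> y \<in> A \<Longrightarrow> le x y \<Longrightarrow> le (r x) (r y)"
    and retraction_idem: "x \<in> A \<Longrightarrow> r (r x) = r x"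
  using assms unfolding retraction_def order_preserving_def by blast+

lemma retraction_fixes_image: "retraction A le r \<Longrightarrow> y \<in> r ` A \<Longrightarrow> r y = y"
  using retraction_idem[of A le r] by auto

lemma retraction_restrict:
  "retraction A le r \<Longrightarrow> B \<subseteq> A \<Longrightarrow> r ` B \<subseteq> B \<Longrightarrow> retraction B le r"
  unfolding retraction_def order_preserving_def by blast

lemma is_retract_of_image: "retraction A le r \<Longrightarrow> is_retract_of (r ` A) le A le"
  unfolding is_retract_of_def using order_iso_refl by blast

lemma retraction_comp_embedding:
  assumes r: "retraction A le r" and e_in: "e ` r ` A \<subseteq> A"
    and inverse: "\<And>y. y \<in> r ` A \<Longrightarrow> r (e y) = y"
    and embedding: "\<And>x y. x \<in> r ` A \<Longrightarrow> y \<in> r ` A \<Longrightarrow> le (e x) (e y) \<longleftrightarrow> le x y"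
  shows "retraction A le (e \<circ> r)" "order_iso ((e \<circ> r) ` A) le (r ` A) le"
proof -
  have mono: "le (e (r x)) (e (r y))" if "x \<in> A" "y \<in> A" "le x y" for x y
    using embedding[of "r x" "r y"] retraction_mono[OF r that] that(1,2) by simp
  have "(e \<circ> r) ` A \<subseteq> A"
    using e_in by (simp add: image_comp)
  then show "retraction A le (e \<circ> r)"
    unfolding retraction_def order_preserving_def using mono inverse by auto
  have "bij_betw r (e ` r ` A) (r ` A)"
    by (rule bij_betw_byWitness[where f' = e]) (use inverse e_in in auto)
  moreover have "le x y \<longleftrightarrow> le (r x) (r y)" if "x \<in> e ` r ` A" "y \<in> e ` r ` A" for x y
    using that inverse embedding by auto
  ultimately show "order_iso ((e \<circ> r) ` A) le (r ` A) le"
    unfolding order_iso_def by (auto simp: image_comp)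
qed

lemma minimals_image_embedding:
  assumes "inj_on e A" and "\<And>x y. x \<in> A \<Longrightarrow> y \<in> A \<Longrightarrow> le (e x) (e y) \<longleftrightarrow> le x y"
  shows "minimals (e ` A) le = e ` minimals A le"
  using assms by (auto simp: minimals_iff inj_on_def image_iff) (metis minimals_iff)

lemma retraction_redirect_minimal:
  assumes A: "is_poset A le" and r: "retraction A le r"
    and c: "c \<in> A" "c \<notin> r ` A" "\<And>y. y \<in> A \<Longrightarrow> le y c \<Longrightarrow> y = c"
    and a: "a \<in> r ` A" "le a (r c)"
  shows "retraction A le (r(c := a))" "r(c := a) ` A = r ` A"
proof -
  let ?s = "r(c := a)"
  have ra: "r a = a"
    using retraction_fixes_image[OF r a(1)] .
  have aA: "a \<in> A"
    using a(1) retraction_in[OF r] by blast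
  have "a \<noteq> c"
    using a(1) c(2) by blast
  have rx: "?s x = r x" "r x \<noteq> c" if "x \<in> A" "x \<noteq> c" for x
    using that c(2) by (simp, blast)
  have mono: "le (?s x) (?s y)" if "x \<in> A" "y \<in> A" "le x y" for x y
  proof (cases "x = c")
    case True
    show ?thesis
    proof (cases "y = c")
      case False
      have "le (r c) (r y)"
        using retraction_mono[OF r c(1) that(2)] that(3) True by simp
      then have "le a (r y)"
        using is_poset_trans[OF A aA _ retraction_in[OF r that(2)] a(2)]
          retraction_in[OF r c(1)] by blast
      then show ?thesis
        using True False by simp
    qed (use True is_poset_refl[OF A aA] in simp)
  next
    case False
    then have "y \<noteq> c"
      using c(3) that by blast
    then show ?thesis
      using False retraction_mono[OF r that] by simp
  qed
  have idem: "?s (?s x) = ?s x" if "x \<in> A" for x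
    using that rx[OF that] ra \<open>a \<noteq> c\<close> retraction_idem[OF r that] by (cases "x = c") auto
  have "?s x \<in> A" if "x \<in> A" for x
    using that aA retraction_in[OF r that] by simp
  then show "retraction A le ?s"
    unfolding retraction_def order_preserving_def using mono idem by blast
  show "?s ` A = r ` A"
  proof
    show "?s ` A \<subseteq> r ` A"
      using a(1) rx by (auto simp: image_iff)
    show "r ` A \<subseteq> ?s ` A"
    proof
      fix y assume y: "y \<in> r ` A"
      then have "y \<in> A" "y \<noteq> c" "r y = y"
        using retraction_in[OF r] c(2) retraction_fixes_image[OF r] by blast+
      then show "y \<in> ?s ` A"
        using rx(1) by (metis image_eqI)
    qed
  qed
qed

section \<open>Retractions of a poset with a three-point bottom level\<close>

locale three_point_base =
  fixes P :: "'a set" and le :: "'a \<Rightarrow> 'a \<Rightarrow> bool" and L0 L1 U :: "'a set"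
  assumes poset: "is_poset P le"
    and P_eq: "P = L0 \<union> L1 \<union> U"
    and L0_minimal: "\<And>x y. x \<in> L0 \<Longrightarrow> y \<in> P \<Longrightarrow> le y x \<Longrightarrow> y = x"
    and card_L0: "card L0 = 3"
    and antichain_L1: "antichain le L1"
    and L1_above_two: "\<And>y. y \<in> L1 \<Longrightarrow> 2 \<le> card {x\<in>L0. le x y}"
    and U_above_L0: "\<And>z x. z \<in> U \<Longrightarrow> x \<in> L0 \<Longrightarrow> le x z"
    and U_nonempty: "U \<noteq> {}"
begin

definition base_below :: "'a \<Rightarrow> 'a set" where
  "base_below y = {x\<in>L0. le x y}"

lemma finite_L0: "finite L0"
  using card_L0 card.infinite by fastforce

lemma L0_other_point:
  obtains w where "w \<in> L0" "w \<noteq> x"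
proof -
  have "\<not> L0 \<subseteq> {x}"
    using card_mono[of "{x}" L0] card_L0 by auto
  then show thesis
    using that by blast
qed

lemma finite_base_below: "finite (base_below y)"
  unfolding base_below_def using finite_L0 by simp

lemma base_below_L0: "x \<in> L0 \<Longrightarrow> base_below x = {x}"
  unfolding base_below_def using L0_minimal is_poset_refl[OF poset] P_eq by auto

lemma base_below_U: "z \<in> U \<Longrightarrow> base_below z = L0"
  unfolding base_below_def using U_above_L0 by auto

lemma card_base_below_L1: "y \<in> L1 \<Longrightarrow> 2 \<le> card (base_below y)"
  unfolding base_below_def using L1_above_two .

lemma L0_L1_disjoint: "L0 \<inter> L1 = {}"
  using card_base_below_L1 base_below_L0 by fastforce

lemma L0_U_disjoint: "L0 \<inter> U = {}"
  using base_below_U base_below_L0 card_L0 by fastforce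

lemma card_base_below_pos: "y \<in> P \<Longrightarrow> 1 \<le> card (base_below y)"
  using P_eq base_below_L0 card_base_below_L1 base_below_U card_L0 by fastforce

lemma base_below_subset_singleton:
  assumes "y \<in> P" "base_below y \<subseteq> {w}"
  shows "y = w"
proof -
  have "card (base_below y) \<le> 1"
    using card_mono[OF _ assms(2)] by simp
  then show ?thesis
    using assms P_eq base_below_L0 card_base_below_L1 base_below_U card_L0 by fastforce
qed

end

locale two_minimal_retraction = three_point_base +
  fixes r :: "'a \<Rightarrow> 'a"
  assumes retraction: "retraction P le r"
    and card_minimals: "card (minimals (r ` P) le) = 2"
begin

abbreviation "R \<equiv> r ` P"
abbreviation "R0 \<equiv> minimals R le"

lemma R_subset: "R \<subseteq> P"
  using retraction unfolding retraction_def by blast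

lemma R0_subset: "R0 \<subseteq> P"
  using minimals_subset[of R le] R_subset by blast

lemma R0_fixed: "m \<in> R0 \<Longrightarrow> r m = m"
  using minimals_subset[of R le] retraction_fixes_image[OF retraction] by blast

lemma retract_below_minimal:
  assumes "x \<in> P" "m \<in> R0" "le x m"
  shows "r x = m"
proof -
  have "le (r x) m"
    using retraction_mono[OF retraction assms(1) _ assms(3)] R0_subset R0_fixed assms(2) by auto
  then show ?thesis
    using assms(1,2) by (auto simp: minimals_iff)
qed

lemma retract_base_below: "m \<in> R0 \<Longrightarrow> x \<in> base_below m \<Longrightarrow> r x = m"
  unfolding base_below_def using retract_below_minimal P_eq by blast

text \<open>The two minimal points of the retract draw on disjoint parts of the three-element base.\<close>

lemma card_base_below_minimals:
  assumes "m \<in> R0" "m' \<in> R0" "m \<noteq> m'"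
  shows "card (base_below m) + card (base_below m') \<le> 3"
proof -
  have "base_below m \<inter> base_below m' = {}"
    using retract_base_below assms by blast
  then have "card (base_below m \<union> base_below m') = card (base_below m) + card (base_below m')"
    by (simp add: card_Un_disjoint finite_base_below)
  moreover have "card (base_below m \<union> base_below m') \<le> card L0"
    by (rule card_mono[OF finite_L0]) (auto simp: base_below_def)
  ultimately show ?thesis
    using card_L0 by simp
qed

lemma other_minimal:
  assumes "m \<in> R0"
  obtains m' where "m' \<in> R0" "m' \<noteq> m"
proof -
  obtain x y where xy: "R0 = {x, y}" "x \<noteq> y"
    using card_minimals unfolding card_2_iff by blast
  show thesis
    using that[of x] that[of y] xy assms by blast
qed

lemma minimal_retract_notin_U:
  assumes "m \<in> R0"
  shows "m \<notin> U"
proof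
  assume "m \<in> U"
  obtain m' where m': "m' \<in> R0" "m' \<noteq> m"
    using other_minimal[OF assms] .
  have "1 \<le> card (base_below m')"
    using card_base_below_pos m'(1) R0_subset by blast
  moreover have "card (base_below m) + card (base_below m') \<le> 3"
    using card_base_below_minimals[OF assms m'(1)] m'(2) by simp
  ultimately show False
    using base_below_U[OF \<open>m \<in> U\<close>] card_L0 by simp
qed

lemma minimal_retract_in_L0_or_L1: "m \<in> R0 \<Longrightarrow> m \<in> L0 \<union> L1"
  using minimal_retract_notin_U R0_subset P_eq by blast

lemma minimals_retract_not_both_L1:
  assumes "m \<in> R0" "m' \<in> R0" "m \<noteq> m'" "m \<in> L1"
  shows "m' \<in> L0"
proof (rule ccontr)
  assume "m' \<notin> L0"
  then have "m' \<in> L1"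
    using minimal_retract_in_L0_or_L1[OF assms(2)] by blast
  then show False
    using card_base_below_minimals[OF assms(1-3)] card_base_below_L1[OF assms(4)]
      card_base_below_L1[of m'] by simp
qed

lemma minimals_retract_cases:
  obtains a b where "R0 = {a, b}" "a \<noteq> b" "a \<in> L0" "b \<in> L0 \<union> L1"
proof -
  obtain m m' where mm': "R0 = {m, m'}" "m \<noteq> m'"
    using card_minimals unfolding card_2_iff by blast
  then have m: "m \<in> R0" "m' \<in> R0"
    by auto
  show thesis
  proof (cases "m \<in> L0")
    case True
    then show thesis
      using that mm' minimal_retract_in_L0_or_L1[OF m(2)] by blast
  next
    case False
    then have "m \<in> L1" "m' \<in> L0"
      using minimal_retract_in_L0_or_L1[OF m(1)] minimals_retract_not_both_L1[OF m] mm'(2) by auto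
    then show thesis
      using that[of m' m] mm' by (simp add: insert_commute)
  qed
qed

lemma minimals_retract_subset: "R0 \<subseteq> L0 \<union> L1"
  by (rule minimals_retract_cases) auto

lemma minimals_retract_meets_L0: "R0 \<inter> L0 \<noteq> {}"
  by (rule minimals_retract_cases) auto


context
  fixes a b
  assumes R0_eq: "R0 = {a, b}" and a_L0: "a \<in> L0" and b_L1: "b \<in> L1"
begin

lemma a_R0: "a \<in> R0" and b_R0: "b \<in> R0" and a_ne_b: "a \<noteq> b"
  using R0_eq a_L0 b_L1 L0_L1_disjoint by auto

lemma retract_L0_other:
  assumes "x \<in> L0" "x \<noteq> a"
  shows "r x = b"
proof -
  have "a \<notin> base_below b"
    using retract_base_below[OF b_R0] R0_fixed[OF a_R0] a_ne_b by auto
  then have sub: "base_below b \<subseteq> L0 - {a}"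
    unfolding base_below_def by blast
  have "card (L0 - {a}) = 2"
    using card_L0 a_L0 finite_L0 by simp
  then have "base_below b = L0 - {a}"
    using card_subset_eq[OF _ sub] card_base_below_L1[OF b_L1] card_mono[OF _ sub] finite_L0
    by simp
  then show ?thesis
    using retract_base_below[OF b_R0] assms by blast
qed

lemma retract_image_L0: "r ` L0 = {a, b}"
proof
  show "r ` L0 \<subseteq> {a, b}"
    using R0_fixed[OF a_R0] retract_L0_other by auto
  obtain w where w: "w \<in> L0" "w \<noteq> a"
    using L0_other_point .
  show "{a, b} \<subseteq> r ` L0"
    using image_eqI[of a r a] image_eqI[of b r w] R0_fixed[OF a_R0] retract_L0_other[OF w] a_L0 w(1)
    by auto
qed

lemma b_le_retract:
  assumes "x \<in> P" "x \<noteq> a"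
  shows "le b (r x)"
proof -
  obtain w where w: "w \<in> base_below x" "w \<noteq> a"
    using base_below_subset_singleton[OF assms(1)] assms(2) by blast
  then have "r w = b" "w \<in> P" "le w x"
    using retract_L0_other P_eq unfolding base_below_def by auto
  then show ?thesis
    using retraction_mono[OF retraction _ assms(1)] by metis
qed

lemma retract_fiber_a: "x \<in> P \<Longrightarrow> r x = a \<Longrightarrow> x = a"
  using b_le_retract minimals_incomparable[OF b_R0 a_R0] a_ne_b by fastforce

lemma retract_U:
  assumes "z \<in> U"
  shows "r z \<in> R - R0"
proof -
  have zP: "z \<in> P" and "z \<noteq> a"
    using assms P_eq a_L0 L0_U_disjoint by auto
  have "le (r a) (r z)"
    using retraction_mono[OF retraction _ zP U_above_L0[OF assms a_L0]] a_L0 P_eq by blast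
  then have "le a (r z)"
    using R0_fixed[OF a_R0] by simp
  moreover have "le b (r z)"
    using b_le_retract[OF zP \<open>z \<noteq> a\<close>] .
  ultimately have "r z \<noteq> a" "r z \<noteq> b"
    using minimals_incomparable[OF a_R0 b_R0] minimals_incomparable[OF b_R0 a_R0] a_ne_b
    by auto
  then show ?thesis
    using zP R0_eq by auto
qed

lemma nonminimal_retract_in_U:
  assumes "y \<in> R - R0"
  shows "y \<in> U"
proof -
  have y: "y \<in> P" "r y = y" "y \<noteq> a" "y \<noteq> b"
    using assms R_subset retraction_fixes_image[OF retraction, of y] R0_eq by auto
  have "y \<notin> L0"
    using retract_L0_other[of y] y(2-4) by auto
  moreover have "y \<notin> L1"
  proof
    assume "y \<in> L1"
    then show False
      using b_le_retract[OF y(1,3)] y(2,4) antichain_L1 b_L1 unfolding antichain_def by metis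
  qed
  ultimately show ?thesis
    using y(1) P_eq by blast
qed

lemma retract_image_U: "r ` U = R - R0"
proof
  show "r ` U \<subseteq> R - R0"
    using retract_U by blast
  show "R - R0 \<subseteq> r ` U"
  proof
    fix y assume "y \<in> R - R0"
    then show "y \<in> r ` U"
      using nonminimal_retract_in_U retraction_fixes_image[OF retraction] by (metis DiffD1 image_eqI)
  qed
qed

lemma retraction_U: "retraction U le r"
  using retraction_restrict[OF retraction] retract_image_U nonminimal_retract_in_U P_eq by blast

lemma retract_ne_minimals: "R \<noteq> R0"
  using retract_U U_nonempty by blast

lemma le_redirect_b_iff:
  assumes w: "w \<in> L0" "w \<noteq> a" and xy: "x \<in> R" "y \<in> R"
  shows "le (if x = b then w else x) (if y = b then w else y) \<longleftrightarrow> le x y"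
proof -
  have wP: "w \<in> P" and bP: "b \<in> P"
    using w b_L1 P_eq by auto
  have w_notin_R: "w \<notin> R"
    using retract_L0_other[OF w] retraction_fixes_image[OF retraction, of w] w(1) b_L1
      L0_L1_disjoint by force
  have not_le_w: "\<not> le u w" if "u \<in> R" for u
    using L0_minimal[OF w(1)] that R_subset w_notin_R by blast
  have not_le_b: "\<not> le u b" if "u \<in> R" "u \<noteq> b" for u
    using b_R0 that by (auto simp: minimals_iff)
  have upper: "le w u \<and> le b u" if "u \<in> R" "u \<noteq> a" "u \<noteq> b" for u
  proof -
    have "u \<in> U" "r u = u"
      using nonminimal_retract_in_U that R0_eq retraction_fixes_image[OF retraction, of u] by auto
    then show ?thesis
      using U_above_L0[OF _ w(1)] b_le_retract[of u] that R_subset by fastforce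
  qed
  have "\<not> le w a"
    using L0_minimal[OF a_L0 wP] w(2) by blast
  moreover have "\<not> le b a"
    using not_le_b[of a] minimals_incomparable[OF b_R0 a_R0] a_ne_b by blast
  ultimately show ?thesis
    using xy not_le_w not_le_b upper is_poset_refl[OF poset wP] is_poset_refl[OF poset bP]
    by (cases "x = b"; cases "y = b"; cases "y = a") auto
qed

lemma normalizing_retraction_L1:
  "\<exists>s. retraction P le s \<and> order_iso (s ` P) le R le \<and> minimals (s ` P) le \<subseteq> L0
     \<and> s ` L0 = minimals (s ` P) le \<and> (\<exists>p\<in>minimals (s ` P) le. {x\<in>P. s x = p} = {p})"
proof -
  obtain w where w: "w \<in> L0" "w \<noteq> a"
    using L0_other_point .
  define e where "e y = (if y = b then w else y)" for y
  have inverse: "r (e y) = y" if "y \<in> R" for y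
    using retract_L0_other[OF w] retraction_fixes_image[OF retraction that] by (simp add: e_def)
  have e_in: "e ` R \<subseteq> P"
    using R_subset w(1) P_eq by (auto simp: e_def)
  have embedding: "le (e x) (e y) \<longleftrightarrow> le x y" if "x \<in> R" "y \<in> R" for x y
    unfolding e_def using le_redirect_b_iff[OF w that] .
  define s where "s = e \<circ> r"
  have sP: "s ` P = e ` R"
    unfolding s_def by (simp add: image_comp)
  have min: "minimals (s ` P) le = {a, w}"
  proof -
    have "inj_on e R"
      using inverse by (metis inj_on_inverseI)
    then have "minimals (s ` P) le = e ` R0"
      unfolding sP using minimals_image_embedding embedding by blast
    then show ?thesis
      using R0_eq a_ne_b by (simp add: e_def)
  qed
  have sL0: "s ` L0 = {a, w}"
    using retract_image_L0 a_ne_b by (auto simp: s_def e_def image_comp[symmetric])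
  have fiber: "{x\<in>P. s x = a} = {a}"
    using retract_fiber_a w(2) R0_fixed[OF a_R0] a_L0 P_eq a_ne_b by (auto simp: s_def e_def)
  moreover have "retraction P le s" "order_iso (s ` P) le R le"
    unfolding s_def
    by (rule retraction_comp_embedding[OF retraction e_in]; simp add: inverse embedding)+
  ultimately show ?thesis
    using min sL0 w(1) a_L0 by (intro exI[of _ s]) simp
qed

end

context
  fixes a b c
  assumes R0_eq: "R0 = {a, b}" and a_L0: "a \<in> L0" and b_L0: "b \<in> L0"
    and c_L0: "c \<in> L0" and c_ne: "c \<noteq> a" "c \<noteq> b" and a_le: "le a (r c)"
begin

lemma minimal_points_distinct: "a \<noteq> b"
  using R0_eq card_minimals by auto

lemma L0_eq: "L0 = {a, b, c}"
proof -
  have "{a, b, c} \<subseteq> L0" "card {a, b, c} = 3"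
    using a_L0 b_L0 c_L0 c_ne minimal_points_distinct by auto
  then show ?thesis
    using card_subset_eq[OF finite_L0] card_L0 by metis
qed

lemma retract_fiber_b:
  assumes "x \<in> P" "r x = b"
  shows "x = b"
proof (rule base_below_subset_singleton[OF assms(1)], rule subsetI)
  fix w assume "w \<in> base_below x"
  then have w: "w \<in> L0" "le w x" "w \<in> P"
    unfolding base_below_def using P_eq by auto
  have b_R0: "b \<in> R0" and a_R0: "a \<in> R0"
    using R0_eq by auto
  have "le (r w) b"
    using retraction_mono[OF retraction w(3) assms(1) w(2)] assms(2) by simp
  then have "r w = b"
    using b_R0 w(3) by (auto simp: minimals_iff)
  moreover have "\<not> le a b"
    using minimals_incomparable[OF a_R0 b_R0] minimal_points_distinct by blast
  ultimately show "w \<in> {b}"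
    using L0_eq w(1) a_le R0_fixed[OF a_R0] minimal_points_distinct by auto
qed

lemma normalizing_retraction_L0:
  "\<exists>s. retraction P le s \<and> order_iso (s ` P) le R le \<and> minimals (s ` P) le \<subseteq> L0
     \<and> s ` L0 = minimals (s ` P) le \<and> (\<exists>p\<in>minimals (s ` P) le. {x\<in>P. s x = p} = {p})"
proof -
  let ?s = "r(c := a)"
  have cP: "c \<in> P"
    using c_L0 P_eq by blast
  have c_min: "\<And>y. y \<in> P \<Longrightarrow> le y c \<Longrightarrow> y = c"
    using L0_minimal[OF c_L0] by blast
  have "c \<notin> R"
  proof
    assume "c \<in> R"
    then have "c \<in> R0"
      using c_min R_subset by (auto simp: minimals_iff)
    then show False
      using R0_eq c_ne by auto
  qed
  moreover have "a \<in> R"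
    using R0_eq minimals_subset[of R le] by blast
  ultimately have s: "retraction P le ?s" "?s ` P = R"
    using retraction_redirect_minimal[OF poset retraction cP _ c_min _ a_le] by blast+
  have fixed: "r a = a" "r b = b"
    using R0_fixed R0_eq by auto
  then have "?s ` L0 = {a, b}"
    unfolding L0_eq using c_ne by auto
  moreover have "{x\<in>P. ?s x = b} = {b}"
  proof -
    have "x = b" if "x \<in> P" "?s x = b" for x
      using that retract_fiber_b minimal_points_distinct by (cases "x = c") auto
    then show ?thesis
      using fixed c_ne b_L0 P_eq by auto
  qed
  ultimately show ?thesis
    using s order_iso_refl[of R le] R0_eq a_L0 b_L0 by (intro exI[of _ ?s]) simp
qed

end

lemma retract_poset: "is_poset R le"
  using is_poset_subset[OF poset R_subset] .

lemma upper_levels_retract: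
  assumes "R0 \<inter> L1 \<noteq> {}"
  shows "1 \<le> height R le \<and> is_retract_of (levels_between R le 1 (height R le)) le U le"
proof -
  obtain a b where ab: "R0 = {a, b}" "a \<in> L0"
    by (rule minimals_retract_cases)
  then have b: "b \<in> L1"
    using assms L0_L1_disjoint by auto
  have "levels_between R le 1 (height R le) = r ` U"
    using levels_between_one_height[OF retract_poset] retract_image_U[OF ab b] by simp
  then show ?thesis
    using height_pos[OF retract_poset retract_ne_minimals[OF ab b]]
      is_retract_of_image[OF retraction_U[OF ab b]] by simp
qed

lemma normalizing_retraction:
  "\<exists>s. retraction P le s \<and> order_iso (s ` P) le R le \<and> minimals (s ` P) le \<subseteq> L0
     \<and> s ` L0 = minimals (s ` P) le \<and> (\<exists>p\<in>minimals (s ` P) le. {x\<in>P. s x = p} = {p})"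
proof -
  obtain a b where ab: "R0 = {a, b}" "a \<noteq> b" "a \<in> L0" "b \<in> L0 \<union> L1"
    by (rule minimals_retract_cases)
  show ?thesis
  proof (cases "b \<in> L1")
    case True
    then show ?thesis
      using normalizing_retraction_L1[OF ab(1,3)] by blast
  next
    case False
    then have b: "b \<in> L0"
      using ab(4) by blast
    have "\<not> L0 \<subseteq> {a, b}"
      using card_mono[of "{a, b}" L0] card_L0 card_insert_le_m1[of 2 "{b}" a] by auto
    then obtain c where c: "c \<in> L0" "c \<noteq> a" "c \<noteq> b"
      by blast
    have "r c \<in> R"
      using c(1) P_eq by blast
    then obtain m where m: "m \<in> R0" "le m (r c)"
      using minimal_below[OF retract_poset] by blast
    then consider "m = a" | "m = b"
      using ab(1) by blast
    then show ?thesis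
    proof cases
      case 1
      then show ?thesis
        using normalizing_retraction_L0[OF ab(1,3) b c] m(2) by blast
    next
      case 2
      have "R0 = {b, a}"
        using ab(1) by blast
      then show ?thesis
        using normalizing_retraction_L0[OF _ b ab(3) c(1,3,2)] m(2) 2 by blast
    qed
  qed
qed

end

section \<open>Levels of sections of width three\<close>

locale width_three_section =
  fixes h :: nat and le :: "nat \<times> nat \<Rightarrow> nat \<times> nat \<Rightarrow> bool"
  assumes is_section: "section3 h le"
begin

lemma poset: "is_poset (sec_carrier h) le"
  using is_section unfolding section3_def by blast

lemma antichain_row: "k \<le> h \<Longrightarrow> antichain le {(k, 0), (k, 1), (k, 2)}"
  using is_section unfolding section3_def by blast

lemma column_chain:
  assumes "k < l" "l \<le> h" "j < 3"
  shows "strict le (k, j) (l, j)"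
  using assms(1,2)
proof (induction l)
  case (Suc l)
  have step: "strict le (l, j) (Suc l, j)"
    using is_section assms(3) Suc.prems unfolding section3_def by simp
  show ?case
  proof (cases "k = l")
    case False
    then have "le (k, j) (l, j)"
      using Suc by (simp add: strict_def)
    then have "le (k, j) (Suc l, j)"
      using is_poset_trans[OF poset, of "(k, j)" "(l, j)" "(Suc l, j)"] step Suc.prems assms(3)
      by (simp add: strict_def sec_carrier_def)
    then show ?thesis
      using Suc.prems by (simp add: strict_def)
  qed (use step in simp)
qed simp

lemma strict_level_less:
  assumes "k \<le> h" "l \<le> h" "i < 3" "j < 3" and st: "strict le (k, i) (l, j)"
  shows "k < l"
proof (rule ccontr)
  assume "\<not> k < l"
  have row: "(k, i) \<in> {(k, 0), (k, 1), (k, 2)}" "(k, j) \<in> {(k, 0), (k, 1), (k, 2)}"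
    using assms(3,4) by auto
  have le_col: "le (l, j) (k, j)"
    using column_chain[of l k j] \<open>\<not> k < l\<close> assms is_poset_refl[OF poset, of "(k, j)"]
    by (cases "l = k") (auto simp: strict_def sec_carrier_def)
  then have "le (k, i) (k, j)"
    using is_poset_trans[OF poset, of "(k, i)" "(l, j)" "(k, j)"] st assms
    by (simp add: strict_def sec_carrier_def)
  then have "(k, i) = (k, j)"
    using antichain_row[OF assms(1)] row unfolding antichain_def by metis
  then have "i = j"
    by simp
  then show False
    using is_poset_antisym[OF poset, of "(k, i)" "(l, j)"] le_col st assms
    by (simp add: strict_def sec_carrier_def)
qed

lemma rotate_strict:
  assumes "k \<le> h" "l \<le> h" "i < 3" "j < 3" "strict le (k, i) (l, j)"
  shows "strict le (k, (i + t) mod 3) (l, (j + t) mod 3)"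
proof (induction t)
  case (Suc t)
  have "strict le (k, ((i + t) mod 3 + 1) mod 3) (l, ((j + t) mod 3 + 1) mod 3)"
    using is_section assms(1,2) Suc unfolding section3_def by simp
  then show ?case
    by (simp add: mod_Suc_eq)
qed (use assms in simp)

lemma minimals_block:
  assumes "k \<le> n" "n \<le> h"
  shows "minimals ({k..n} \<times> {..<3}) le = {k} \<times> {..<3}"
proof (intro equalityI subsetI)
  fix x assume x: "x \<in> minimals ({k..n} \<times> {..<3}) le"
  then obtain l j where x_eq: "x = (l, j)" "k \<le> l" "l \<le> n" "j < 3"
    unfolding minimals_def by auto
  have "\<not> strict le (k, j) (l, j)"
    using x x_eq assms(1) unfolding minimals_def by auto
  then have "l = k"
    using column_chain[of k l j] x_eq assms(2) by fastforce
  then show "x \<in> {k} \<times> {..<3}"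
    using x_eq by simp
next
  fix x :: "nat \<times> nat" assume "x \<in> {k} \<times> {..<3}"
  then obtain j where x_eq: "x = (k, j)" "j < 3"
    by auto
  have "\<not> strict le y (k, j)" if "y \<in> {k..n} \<times> {..<3}" for y
    using that strict_level_less[of "fst y" k "snd y" j] x_eq(2) assms by force
  then show "x \<in> minimals ({k..n} \<times> {..<3}) le"
    unfolding minimals_def using x_eq assms(1) by auto
qed

lemma rest_block: "n \<le> h \<Longrightarrow> rest ({..n} \<times> {..<3}) le k = {k..n} \<times> {..<3}"
proof (induction k)
  case (Suc k)
  then have "rest ({..n} \<times> {..<3}) le (Suc k)
      = {k..n} \<times> {..<3} - minimals ({k..n} \<times> {..<3}) le"
    by simp
  moreover have "{k..n} \<times> {..<3} - {k} \<times> {..<3} = {Suc k..n} \<times> ({..<3} :: nat set)"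
    by auto
  ultimately show ?case
    using minimals_block[OF _ Suc.prems] by (cases "k \<le> n") simp_all
qed auto

lemma level_block:
  assumes "n \<le> h"
  shows "level ({..n} \<times> {..<3}) le k = (if k \<le> n then {k} \<times> {..<3} else {})"
proof (cases "k \<le> n")
  case True
  then show ?thesis
    unfolding level_def rest_block[OF assms] using minimals_block[OF True assms] by simp
next
  case False
  then show ?thesis
    unfolding level_def rest_block[OF assms] minimals_def by simp
qed

lemma height_block:
  assumes "n \<le> h"
  shows "height ({..n} \<times> {..<3}) le = n"
proof -
  have "level ({..n} \<times> {..<3}) le k \<noteq> {} \<longleftrightarrow> k \<le> n" for k
    by (simp add: level_block[OF assms] lessThan_empty_iff)
  then have "{k. level ({..n} \<times> {..<3}) le k \<noteq> {}} = {..n}"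
    by auto
  then show ?thesis
    unfolding height_def by (simp add: Max_eq_iff)
qed

lemma levels_between_block:
  "n \<le> h \<Longrightarrow> levels_between ({..n} \<times> {..<3}) le a b = {a..min b n} \<times> {..<3}"
  unfolding levels_between_def by (auto simp: level_block split: if_splits)

lemma lower_segment_eq: "lower_segment h le = {..h - 1} \<times> {..<3}"
  unfolding lower_segment_def sec_carrier_def levels_between_block[OF order_refl]
  by (simp add: atLeast0AtMost)

lemma cross_edge:
  assumes "nice (sec_carrier h) le"
  obtains j where "0 < j" "j < 3" "strict le (0, j) (1, 0)"
proof -
  have h: "1 \<le> h"
    using is_section unfolding section3_def by blast
  have mem: "(0, 0) \<in> sec_carrier h" "(1, 0) \<in> sec_carrier h"
    using h by (auto simp: sec_carrier_def)
  have "strict le (0, 0) (1, 0)"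
    using column_chain[OF _ h] by simp
  then obtain z where z: "z \<in> sec_carrier h" "strict le z (1, 0)" "\<not> le z (0, 0)"
    using assms mem unfolding nice_def by blast
  obtain k j where z_eq: "z = (k, j)" "k \<le> h" "j < 3"
    using z(1) by (auto simp: sec_carrier_def)
  have "k = 0"
    using strict_level_less[of k 1 j 0] z(2) z_eq h by simp
  moreover have "0 < j"
  proof (rule ccontr)
    assume "\<not> 0 < j"
    then show False
      using z(3) z_eq \<open>k = 0\<close> is_poset_refl[OF poset mem(1)] by simp
  qed
  ultimately show thesis
    using that z(2) z_eq by simp
qed

lemma two_below_level_one:
  assumes "nice (sec_carrier h) le" "i < 3"
  shows "2 \<le> card {x \<in> {0} \<times> {..<3}. le x (1, i)}"
proof -
  have h: "1 \<le> h"
    using is_section unfolding section3_def by blast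
  obtain j where j: "0 < j" "j < 3" "strict le (0, j) (1, 0)"
    using cross_edge[OF assms(1)] .
  have "strict le (0, (j + i) mod 3) (1, (0 + i) mod 3)"
    using rotate_strict[OF _ h j(2) _ j(3)] by simp
  then have "le (0, (j + i) mod 3) (1, i)" "le (0, i) (1, i)"
    using column_chain[OF _ h assms(2)] assms(2) by (simp_all add: strict_def)
  moreover have "(j + i) mod 3 \<noteq> i"
    using j(1,2) assms(2) by (auto simp: mod_if)
  ultimately have sub: "{(0, (j + i) mod 3), (0, i)} \<subseteq> {x \<in> {0} \<times> {..<3}. le x (1, i)}"
    and two: "card {(0 :: nat, (j + i) mod 3), (0, i)} = 2"
    using assms(2) by auto
  have "finite {x \<in> {0} \<times> {..<3}. le x (1, i)}"
    by simp
  from card_mono[OF this sub] show ?thesis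
    using two by simp
qed

lemma bottom_below_upper_levels:
  assumes "horizon2 (sec_carrier h) le" "2 \<le> l" "l \<le> h" "i < 3" "j < 3"
  shows "strict le (0, i) (l, j)"
proof -
  have "set_less le (level (sec_carrier h) le 0) (level (sec_carrier h) le l)"
    using assms(1,2) unfolding horizon2_def by simp
  then show ?thesis
    using assms(3-5) unfolding set_less_def sec_carrier_def level_block[OF order_refl] by simp
qed

end

lemma lower_segment_three_point_base:
  fixes h :: nat and le :: "nat \<times> nat \<Rightarrow> nat \<times> nat \<Rightarrow> bool"
  defines "P \<equiv> lower_segment h le"
  assumes N2: "N2 h le" and height: "2 \<le> height P le"
  shows "three_point_base P le (level P le 0) (level P le 1) (levels_between P le 2 (height P le))"
proof -
  interpret width_three_section h le
    using N2 unfolding N2_def by unfold_locales blast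
  define n where "n = h - 1"
  have n_le: "n \<le> h" and P_eq: "P = {..n} \<times> {..<3}"
    unfolding P_def n_def lower_segment_eq by simp_all
  then have height_P: "height P le = n"
    using height_block by simp
  then have n: "2 \<le> n"
    using height by simp
  have L0: "level P le 0 = {0} \<times> {..<3}" and L1: "level P le 1 = {1} \<times> {..<3}"
    using level_block[OF n_le] n unfolding P_eq by simp_all
  have U: "levels_between P le 2 (height P le) = {2..n} \<times> {..<3}"
    using levels_between_block[OF n_le] height_block[OF n_le] unfolding P_eq by simp
  have "{..n} = {0} \<union> {1} \<union> {2..n}"
    using n by auto
  then have P_split: "P = {0} \<times> {..<3} \<union> {1} \<times> {..<3} \<union> {2..n} \<times> {..<3}"
    unfolding P_eq by blast
  show ?thesis
    unfolding L0 L1 U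
  proof
    show "is_poset P le"
      unfolding P_eq by (rule is_poset_subset[OF poset]) (use n_le in \<open>auto simp: sec_carrier_def\<close>)
  next
    show "P = {0} \<times> {..<3} \<union> {1} \<times> {..<3} \<union> {2..n} \<times> {..<3}"
      by (rule P_split)
  next
    fix x y assume x: "x \<in> {0} \<times> {..<3}" and y: "y \<in> P" and "le y x"
    then have "\<not> strict le y x"
      using strict_level_less[of "fst y" "fst x" "snd y" "snd x"] n_le unfolding P_eq by auto
    then show "y = x"
      using \<open>le y x\<close> by (simp add: strict_def)
  next
    show "card ({0 :: nat} \<times> {..<3 :: nat}) = 3"
      by (simp add: card_cartesian_product)
  next
    have "{1} \<times> {..<3} = {(1 :: nat, 0 :: nat), (1, 1), (1, 2)}"
      by (auto simp: numeral_3_eq_3 less_Suc_eq)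
    then show "antichain le ({1} \<times> {..<3})"
      using antichain_row[of 1] n n_le by simp
  next
    fix y :: "nat \<times> nat" assume "y \<in> {1} \<times> {..<3}"
    then show "2 \<le> card {x \<in> {0} \<times> {..<3}. le x y}"
      using two_below_level_one N2 unfolding N2_def by auto
  next
    fix z x :: "nat \<times> nat" assume "z \<in> {2..n} \<times> {..<3}" "x \<in> {0} \<times> {..<3}"
    then show "le x z"
      using bottom_below_upper_levels[of "fst z" "snd x" "snd z"] N2 n_le
      unfolding N2_def by (auto simp: strict_def)
  next
    show "{2..n} \<times> {..<3 :: nat} \<noteq> {}"
      using n by (simp add: lessThan_empty_iff)
  qed
qed

theorem lemma4p4:
  fixes h :: nat and le :: "nat \<times> nat \<Rightarrow> nat \<times> nat \<Rightarrow> bool"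
    and r :: "nat \<times> nat \<Rightarrow> nat \<times> nat"
  defines "P \<equiv> lower_segment h le"
  defines "R \<equiv> r ` P"
  assumes Q: "N2 h le"
    and hP: "height P le \<ge> 2"
    and r: "retraction P le r"
    and R0: "card (level R le 0) = 2" "antichain le (level R le 0)"
  shows "(level R le 0 \<subseteq> level P le 0 \<union> level P le 1
          \<and> level R le 0 \<inter> level P le 0 \<noteq> {}
          \<and> (level R le 0 \<inter> level P le 1 \<noteq> {} \<longrightarrow>
               height R le \<ge> 1
             \<and> is_retract_of (levels_between R le 1 (height R le)) le
                             (levels_between P le 2 (height P le)) le))
       \<and> (\<exists>s. retraction P le s
             \<and> order_iso (s ` P) le R le
             \<and> level (s ` P) le 0 \<subseteq> level P le 0
             \<and> s ` level P le 0 = level (s ` P) le 0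
             \<and> (\<exists>p\<in>level (s ` P) le 0. {x\<in>P. s x = p} = {p}))"
proof -
  have base: "three_point_base P le (level P le 0) (level P le 1) (levels_between P le 2 (height P le))"
    using lower_segment_three_point_base[OF Q] hP unfolding P_def .
  interpret two_minimal_retraction P le "level P le 0" "level P le 1"
      "levels_between P le 2 (height P le)" r
    by (rule two_minimal_retraction.intro[OF base], unfold_locales)
      (use r R0(1) in \<open>simp_all add: R_def level_0\<close>)
  show ?thesis
    using minimals_retract_subset minimals_retract_meets_L0 upper_levels_retract
      normalizing_retraction
    unfolding R_def by (simp add: level_0)
qed

end
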